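(* For $n\ge1$ and $l\in\{1,\dots,n\}$ let $X_{n,l}$ be the depth of the node containing $l$ in the random binary search tree built from a uniformly random permutation of $\{1,\dots,n\}$. Then $$\sup_{l\in\{1,\dots,n\}} d_{\mathrm{TV}}\big(\mathcal{L}(X_{n,l}),\ \mathrm{Po}(E X_{n,l})\big)\le \frac{28+\pi^2}{\log n}\qquad\text{for all } n\ge 2.$$
   Context: Random binary search tree: given a permutation $(\pi(1),\dots,\pi(n))$ of $\{1,\dots,n\}$, the keys are inserted in order $\pi(1),\pi(2),\dots$; $\pi(1)$ is the root, and each subsequent key moves left if smaller and right if larger than the current node's key, starting at the root, until it reaches an empty position where it is placed. The permutation is uniform over all $n!$ permutations. The depth of a node is its number of edges from the root. $\mathcal{L}(X)$ denotes the distribution of $X$. For probability measures $\mu,\nu$ on $\mathbb{N}_0$, $d_{\mathrm{TV}}(\mu,\nu)=\sup_{A\subset\mathbb{N}_0}|\mu(A)-\nu(A)|=\frac12\sum_{k\ge0}|\mu(\{k\})-\nu(\{k\})|$. $\mathrm{Po}(\lambda)$ is the Poisson distribution with mean $\lambda$, with $\mathrm{Po}(0)=\delta_0$. $\log$ is the natural logarithm. *)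

theory Defs
  imports "HOL-Probability.Probability" "HOL-Combinatorics.Multiset_Permutations" "HOL-Library.Tree"
begin

fun bst_insert :: "nat \<Rightarrow> nat tree \<Rightarrow> nat tree" where
  "bst_insert x Leaf = Node Leaf x Leaf"
| "bst_insert x (Node l a r) =
     (if x < a then Node (bst_insert x l) a r
      else if a < x then Node l a (bst_insert x r)
      else Node l a r)"

definition bst_of_list :: "nat list \<Rightarrow> nat tree" where
  "bst_of_list xs = fold bst_insert xs Leaf"

(* Depth (number of edges from the root) of the node containing key x
   (only meaningful when x occurs in the tree). *)
fun key_depth :: "nat \<Rightarrow> nat tree \<Rightarrow> nat" where
  "key_depth x Leaf = 0"
| "key_depth x (Node l a r) =
     (if x = a then 0 else if x < a then Suc (key_depth x l) else Suc (key_depth x r))"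

definition depth_law :: "nat \<Rightarrow> nat \<Rightarrow> nat pmf" where
  "depth_law n l = map_pmf (\<lambda>xs. key_depth l (bst_of_list xs))
                      (pmf_of_set (permutations_of_set {1..n}))"

(* Poisson probabilities with mean lam \<ge> 0; Po(0) = delta_0 since 0^0 = 1. *)
definition po :: "real \<Rightarrow> nat \<Rightarrow> real" where
  "po lam k = lam ^ k / fact k * exp (- lam)"

definition dTV :: "nat pmf \<Rightarrow> (nat \<Rightarrow> real) \<Rightarrow> real" where
  "dTV p q = (1/2) * (\<Sum>k. \<bar>pmf p k - q k\<bar>)"

end

theory Submission
  imports Defs "HOL-Analysis.Harmonic_Numbers"
begin

(* The depth of l is the number of its ancestors, and j is an ancestor of l iff j is inserted
   before every other key between j and l.  So the depth is a sum of indicators I j with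
   p j = E (I j) = 1 / (|j - l| + 1), and its mean mu is harm l + harm (n - l + 1) - 2 >= ln n - 2.
   Moving j to the front of the keys between j and l turns a uniform permutation into one
   conditioned on I j = 1 and can only create ancestors.  For such a monotone coupling the
   Stein-Chen method bounds the distance to Po mu by 3 / mu times the sum of the p j ^ 2 and of
   the covariances of distinct indicators.  Indicators on the same side of l are uncorrelated,
   and on opposite sides the covariance is at most 1 / (a b (a + b - 1)) for intervals of
   lengths a and b; altogether this is at most 6.  Hence the distance is at most
   18 / (ln n - 2), which is below the claimed bound once ln n > 28 + pi^2, and the trivial
   bound 1 covers smaller n. *)

section \<open>Refilling and promotion in permutations\<close>

lemma find_conv_filter: "find P xs = (case filter P xs of [] \<Rightarrow> None | y # _ \<Rightarrow> Some y)"
  by (induction xs) auto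

lemma length_takeWhile_less: "\<exists>x\<in>set xs. \<not> P x \<Longrightarrow> length (takeWhile P xs) < length xs"
  by (induction xs) auto

lemma find_filter: "(\<And>y. P y \<Longrightarrow> Q y) \<Longrightarrow> find P (filter Q xs) = find P xs"
  by (induction xs) auto

lemma find_Some_in_set: "find P xs = Some y \<Longrightarrow> y \<in> set xs"
  by (induction xs) (auto split: if_splits)

lemma find_remove1: "\<not> P x \<Longrightarrow> find P (remove1 x xs) = find P xs"
  by (induction xs) auto

lemma set_take_remove1_subset: "set (take m (remove1 x xs)) \<subseteq> set (take (Suc m) xs)"
proof (induction xs arbitrary: m)
  case (Cons y xs)
  then show ?case by (cases m) (auto simp: set_take_subset_set_take)
qed simp

fun refill :: "('a \<Rightarrow> bool) \<Rightarrow> 'a list \<Rightarrow> 'a list \<Rightarrow> 'a list" where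
  "refill P [] ys = []"
| "refill P (x # xs) ys = (if P x then hd ys # refill P xs (tl ys) else x # refill P xs ys)"

lemma refill_filter_self [simp]: "refill P xs (filter P xs) = xs"
  by (induction xs) auto

context
  fixes P :: "'a \<Rightarrow> bool" and xs ys :: "'a list"
  assumes length_ys: "length ys = length (filter P xs)" and set_ys: "\<forall>y\<in>set ys. P y"
begin

lemma filter_refill: "filter P (refill P xs ys) = ys"
  using length_ys set_ys by (induction xs arbitrary: ys) (auto simp: length_Suc_conv)

lemma refill_refill: "refill P (refill P xs ys) zs = refill P xs zs"
  using length_ys set_ys by (induction xs arbitrary: ys zs) (auto simp: length_Suc_conv)

lemma mset_refill: "mset (refill P xs ys) = mset (filter (\<lambda>y. \<not> P y) xs) + mset ys"
  using length_ys set_ys by (induction xs arbitrary: ys) (auto simp: length_Suc_conv)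

lemma find_refill_iff:
  assumes "\<And>y. P y \<Longrightarrow> K y" and "\<not> P k"
  shows "find K (refill P xs ys) = Some k \<longleftrightarrow> find K xs = Some k"
  using length_ys set_ys assms by (induction xs arbitrary: ys) (auto simp: length_Suc_conv)

end

(* Only l satisfies both P and K, and l is not moved to an earlier P-position, so k remains
   the first element satisfying K. *)
lemma find_refill_later:
  assumes "length ys = length (filter P xs)" "\<forall>y\<in>set ys. P y"
    and "\<And>y. P y \<Longrightarrow> K y \<Longrightarrow> y = l" and "K l" and "\<not> P k" and "find K xs = Some k"
    and "\<And>i. l \<in> set (take i ys) \<Longrightarrow> l \<in> set (take i (filter P xs))"
  shows "find K (refill P xs ys) = Some k"
  using assms
proof (induction xs arbitrary: ys)
  case Nil
  then show ?case by simp
next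
  case (Cons x xs)
  show ?case
  proof (cases "P x")
    case True
    then obtain y ys' where ys: "ys = y # ys'"
      using Cons.prems(1) by (cases ys) auto
    have "\<not> K x"
      using True Cons.prems(5,6) by (auto split: if_splits)
    moreover have "\<not> K y"
    proof
      assume "K y"
      then have "y = l" using Cons.prems(2,3) ys by auto
      then have "l \<in> set (take 1 (filter P (x # xs)))" using Cons.prems(7)[of 1] ys by simp
      then show False using True \<open>K y\<close> \<open>y = l\<close> \<open>\<not> K x\<close> by simp
    qed
    moreover have "l \<in> set (take i (filter P xs))" if "l \<in> set (take i ys')" for i
    proof -
      have "l \<in> set (take (Suc i) (filter P (x # xs)))" using Cons.prems(7)[of "Suc i"] that ys by simp
      then show ?thesis using True \<open>\<not> K x\<close> Cons.prems(4) by auto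
    qed
    ultimately show ?thesis using Cons True ys by auto
  next
    case False
    then show ?thesis using Cons by (auto split: if_splits)
  qed
qed

lemma insert_at_rank_remove1:
  assumes "distinct zs" "x \<in> set zs"
  defines "r \<equiv> length (takeWhile (\<lambda>y. y \<noteq> x) zs)"
  shows "take r (remove1 x zs) @ x # drop r (remove1 x zs) = zs"
proof -
  obtain us vs where zs: "zs = us @ x # vs" "x \<notin> set us"
    using split_list_first[OF assms(2)] by blast
  then have "r = length us" unfolding r_def zs(1) by (subst takeWhile_append2) auto
  then show ?thesis using zs by (simp add: remove1_append)
qed

lemma rank_insert_at:
  assumes "x \<notin> set zs" "r \<le> length zs"
  shows "length (takeWhile (\<lambda>y. y \<noteq> x) (take r zs @ x # drop r zs)) = r"
  using assms by (subst takeWhile_append2) (auto dest: in_set_takeD)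

lemma filter_permutation:
  assumes "xs \<in> permutations_of_set A" "S \<subseteq> A"
  shows "distinct (filter (\<lambda>y. y \<in> S) xs)" "set (filter (\<lambda>y. y \<in> S) xs) = S"
    and "length (filter (\<lambda>y. y \<in> S) xs) = card S"
proof -
  show distinct: "distinct (filter (\<lambda>y. y \<in> S) xs)" and set: "set (filter (\<lambda>y. y \<in> S) xs) = S"
    using assms by (auto simp: permutations_of_set_def)
  show "length (filter (\<lambda>y. y \<in> S) xs) = card S"
    using distinct_card[OF distinct] set by simp
qed

lemma permutations_of_set_iff_mset:
  "finite A \<Longrightarrow> xs \<in> permutations_of_set A \<longleftrightarrow> mset xs = mset_set A"
  by (simp add: permutations_of_set_altdef permutations_of_multiset_def)

lemma mset_filter_not_plus_filter: "mset (filter (\<lambda>y. \<not> P y) xs) + mset (filter P xs) = mset xs"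
  by (induction xs) auto

lemma refill_permutation:
  assumes "finite A" "xs \<in> permutations_of_set A"
    and "length ys = length (filter P xs)" "\<forall>y\<in>set ys. P y" "mset ys = mset (filter P xs)"
  shows "refill P xs ys \<in> permutations_of_set A"
  using assms mset_refill[OF assms(3,4)] mset_filter_not_plus_filter[of P xs]
  by (simp add: permutations_of_set_iff_mset)

(* Moves x to the first position occupied by an element of S; the other elements of S keep
   their order.  On a uniform permutation this gives the law conditioned on x coming first
   among S (sum_promote). *)
definition promote :: "'a set \<Rightarrow> 'a \<Rightarrow> 'a list \<Rightarrow> 'a list" where
  "promote S x xs = refill (\<lambda>y. y \<in> S) xs (x # remove1 x (filter (\<lambda>y. y \<in> S) xs))"

definition demote :: "'a set \<Rightarrow> 'a \<Rightarrow> nat \<Rightarrow> 'a list \<Rightarrow> 'a list" where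
  "demote S x r ys = refill (\<lambda>y. y \<in> S) ys
     (take r (tl (filter (\<lambda>y. y \<in> S) ys)) @ x # drop r (tl (filter (\<lambda>y. y \<in> S) ys)))"

context
  fixes A S :: "'a set" and x :: 'a
  assumes finite_A: "finite A" and S_subset: "S \<subseteq> A" and x_in_S: "x \<in> S"
begin

lemma promote_refill_conds:
  assumes "xs \<in> permutations_of_set A"
  shows "length (x # remove1 x (filter (\<lambda>y. y \<in> S) xs)) = length (filter (\<lambda>y. y \<in> S) xs)"
    and "\<forall>y\<in>set (x # remove1 x (filter (\<lambda>y. y \<in> S) xs)). y \<in> S"
    and "mset (x # remove1 x (filter (\<lambda>y. y \<in> S) xs)) = mset (filter (\<lambda>y. y \<in> S) xs)"
proof -
  have x_in: "x \<in> set (filter (\<lambda>y. y \<in> S) xs)"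
    using filter_permutation(2)[OF assms S_subset] x_in_S by simp
  then show "length (x # remove1 x (filter (\<lambda>y. y \<in> S) xs)) = length (filter (\<lambda>y. y \<in> S) xs)"
    using length_pos_if_in_set[OF x_in] by (simp add: length_remove1)
  show "\<forall>y\<in>set (x # remove1 x (filter (\<lambda>y. y \<in> S) xs)). y \<in> S"
    using x_in_S set_remove1_subset by fastforce
  show "mset (x # remove1 x (filter (\<lambda>y. y \<in> S) xs)) = mset (filter (\<lambda>y. y \<in> S) xs)"
    using x_in by simp
qed

lemma promote_permutation:
  assumes "xs \<in> permutations_of_set A"
  shows "promote S x xs \<in> permutations_of_set A"
  unfolding promote_def by (rule refill_permutation[OF finite_A assms promote_refill_conds[OF assms]])

lemma filter_promote:
  assumes "xs \<in> permutations_of_set A"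
  shows "filter (\<lambda>y. y \<in> S) (promote S x xs) = x # remove1 x (filter (\<lambda>y. y \<in> S) xs)"
  unfolding promote_def by (rule filter_refill[OF promote_refill_conds(1,2)[OF assms]])

lemma filter_eq_Cons_if_find:
  assumes "ys \<in> permutations_of_set A" "find (\<lambda>y. y \<in> S) ys = Some x"
  obtains rest where "filter (\<lambda>y. y \<in> S) ys = x # rest" "x \<notin> set rest" "length rest = card S - 1"
  using assms(2) filter_permutation(1,3)[OF assms(1) S_subset]
  by (cases "filter (\<lambda>y. y \<in> S) ys") (auto simp: find_conv_filter)

context
  fixes ys rest :: "'a list" and r :: nat
  assumes ys: "ys \<in> permutations_of_set A" and filter_ys: "filter (\<lambda>y. y \<in> S) ys = x # rest"
begin

lemma demote_eq: "demote S x r ys = refill (\<lambda>y. y \<in> S) ys (take r rest @ x # drop r rest)"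
  by (simp add: demote_def filter_ys)

lemma demote_refill_conds:
  "length (take r rest @ x # drop r rest) = length (filter (\<lambda>y. y \<in> S) ys)"
  "\<forall>y\<in>set (take r rest @ x # drop r rest). y \<in> S"
  "mset (take r rest @ x # drop r rest) = mset (filter (\<lambda>y. y \<in> S) ys)"
proof -
  have "set rest \<subseteq> S" using filter_permutation(2)[OF ys S_subset] filter_ys by auto
  then show "length (take r rest @ x # drop r rest) = length (filter (\<lambda>y. y \<in> S) ys)"
    "\<forall>y\<in>set (take r rest @ x # drop r rest). y \<in> S"
    using filter_ys x_in_S by (auto dest: in_set_takeD in_set_dropD)
  show "mset (take r rest @ x # drop r rest) = mset (filter (\<lambda>y. y \<in> S) ys)"
    unfolding filter_ys by (metis append_take_drop_id mset.simps(2) mset_append union_mset_add_mset_right)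
qed

lemma filter_demote: "filter (\<lambda>y. y \<in> S) (demote S x r ys) = take r rest @ x # drop r rest"
  unfolding demote_eq by (rule filter_refill[OF demote_refill_conds(1,2)])

lemma demote_permutation: "demote S x r ys \<in> permutations_of_set A"
  unfolding demote_eq by (rule refill_permutation[OF finite_A ys demote_refill_conds])

lemma promote_demote:
  assumes "x \<notin> set rest"
  shows "promote S x (demote S x r ys) = ys"
proof -
  have "remove1 x (take r rest @ x # drop r rest) = rest"
    using assms by (simp add: remove1_append) (metis append_take_drop_id in_set_takeD)
  then have "promote S x (demote S x r ys) = refill (\<lambda>y. y \<in> S) (demote S x r ys) (x # rest)"
    unfolding promote_def filter_demote by simp
  also have "\<dots> = refill (\<lambda>y. y \<in> S) ys (filter (\<lambda>y. y \<in> S) ys)"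
    unfolding demote_eq filter_ys by (rule refill_refill[OF demote_refill_conds(1,2)])
  finally show ?thesis by simp
qed

end

lemma demote_promote:
  assumes "xs \<in> permutations_of_set A"
  shows "demote S x (length (takeWhile (\<lambda>y. y \<noteq> x) (filter (\<lambda>y. y \<in> S) xs))) (promote S x xs) = xs"
proof -
  have "x \<in> set (filter (\<lambda>y. y \<in> S) xs)" using filter_permutation(2)[OF assms S_subset] x_in_S by simp
  with filter_permutation(1)[OF assms S_subset]
  have "demote S x (length (takeWhile (\<lambda>y. y \<noteq> x) (filter (\<lambda>y. y \<in> S) xs))) (promote S x xs) =
      refill (\<lambda>y. y \<in> S) (promote S x xs) (filter (\<lambda>y. y \<in> S) xs)"
    by (simp add: demote_def filter_promote[OF assms] insert_at_rank_remove1)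
  also have "\<dots> = xs"
    unfolding promote_def by (simp add: refill_refill[OF promote_refill_conds(1,2)[OF assms]])
  finally show ?thesis .
qed

lemma bij_betw_promote:
  assumes "r < card S"
  shows "bij_betw (promote S x)
           {xs \<in> permutations_of_set A. length (takeWhile (\<lambda>y. y \<noteq> x) (filter (\<lambda>y. y \<in> S) xs)) = r}
           {ys \<in> permutations_of_set A. find (\<lambda>y. y \<in> S) ys = Some x}"
    (is "bij_betw _ ?ranked ?first")
proof (rule bij_betw_byWitness[where f' = "demote S x r"])
  show "promote S x ` ?ranked \<subseteq> ?first"
    using promote_permutation filter_promote by (auto simp: find_conv_filter)
  show "demote S x r ` ?first \<subseteq> ?ranked"
  proof safe
    fix ys assume ys: "ys \<in> permutations_of_set A" "find (\<lambda>y. y \<in> S) ys = Some x"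
    then obtain rest where rest: "filter (\<lambda>y. y \<in> S) ys = x # rest" "x \<notin> set rest" "length rest = card S - 1"
      by (rule filter_eq_Cons_if_find)
    show "demote S x r ys \<in> permutations_of_set A" by (rule demote_permutation[OF ys(1) rest(1)])
    show "length (takeWhile (\<lambda>y. y \<noteq> x) (filter (\<lambda>y. y \<in> S) (demote S x r ys))) = r"
      unfolding filter_demote[OF ys(1) rest(1)] using rank_insert_at[OF rest(2)] rest(3) assms by simp
  qed
  show "\<forall>xs \<in> ?ranked. demote S x r (promote S x xs) = xs"
    using demote_promote by auto
  show "\<forall>ys \<in> ?first. promote S x (demote S x r ys) = ys"
  proof safe
    fix ys assume ys: "ys \<in> permutations_of_set A" "find (\<lambda>y. y \<in> S) ys = Some x"
    then obtain rest where "filter (\<lambda>y. y \<in> S) ys = x # rest" "x \<notin> set rest"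
      by (rule filter_eq_Cons_if_find)
    then show "promote S x (demote S x r ys) = ys" by (rule promote_demote[OF ys(1)])
  qed
qed

lemma sum_promote:
  fixes f :: "'a list \<Rightarrow> 'b :: comm_semiring_1"
  shows "(\<Sum>xs\<in>permutations_of_set A. f (promote S x xs)) =
     of_nat (card S) * (\<Sum>ys | ys \<in> permutations_of_set A \<and> find (\<lambda>y. y \<in> S) ys = Some x. f ys)"
proof -
  let ?rank = "\<lambda>xs. length (takeWhile (\<lambda>y. y \<noteq> x) (filter (\<lambda>y. y \<in> S) xs))"
  have "?rank xs < card S" if "xs \<in> permutations_of_set A" for xs
  proof -
    have "x \<in> set (filter (\<lambda>y. y \<in> S) xs)"
      using filter_permutation(2)[OF that S_subset] x_in_S by simp
    then have "?rank xs < length (filter (\<lambda>y. y \<in> S) xs)"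
      by (intro length_takeWhile_less) auto
    then show ?thesis using filter_permutation(3)[OF that S_subset] by simp
  qed
  then have "(\<Sum>xs\<in>permutations_of_set A. f (promote S x xs)) =
      (\<Sum>r<card S. \<Sum>xs | xs \<in> permutations_of_set A \<and> ?rank xs = r. f (promote S x xs))"
    by (intro sum.group[symmetric]) auto
  also have "\<dots> = (\<Sum>r<card S. \<Sum>ys | ys \<in> permutations_of_set A \<and> find (\<lambda>y. y \<in> S) ys = Some x. f ys)"
    by (intro sum.cong refl sum.reindex_bij_betw bij_betw_promote) simp
  finally show ?thesis by simp
qed

end

lemma card_find_eq_Some:
  assumes "finite A" "S \<subseteq> A" "x \<in> S"
  shows "real (card {xs \<in> permutations_of_set A. find (\<lambda>y. y \<in> S) xs = Some x}) =
           card (permutations_of_set A) / card S"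
proof -
  have "card S > 0" using assms by (auto simp: card_gt_0_iff dest: finite_subset)
  moreover have "real (card (permutations_of_set A)) =
      card S * real (card {xs \<in> permutations_of_set A. find (\<lambda>y. y \<in> S) xs = Some x})"
    using sum_promote[OF assms, of "\<lambda>_. 1 :: real"] by simp
  ultimately show ?thesis by (simp add: field_simps)
qed

section \<open>Ancestors in binary search trees\<close>

lemma fold_bst_insert_Node:
  "fold bst_insert xs (Node L a R) =
     Node (fold bst_insert (filter (\<lambda>y. y < a) xs) L) a (fold bst_insert (filter (\<lambda>y. a < y) xs) R)"
  by (induction xs arbitrary: L R) auto

lemma bst_of_list_Cons:
  "bst_of_list (x # xs) =
     Node (bst_of_list (filter (\<lambda>y. y < x) xs)) x (bst_of_list (filter (\<lambda>y. x < y) xs))"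
  by (simp add: bst_of_list_def fold_bst_insert_Node)

definition key_interval :: "nat \<Rightarrow> nat \<Rightarrow> nat set" where
  "key_interval i j = {min i j..max i j}"

lemma mem_key_interval [simp]: "i \<in> key_interval i j" "j \<in> key_interval i j"
  by (auto simp: key_interval_def)

lemma card_key_interval: "card (key_interval i j) = (if i \<le> j then j - i else i - j) + 1"
  by (auto simp: key_interval_def min_def max_def)

(* j is an ancestor of l in bst_of_list xs iff j is inserted before every other key between j and l *)
definition ancestors :: "nat list \<Rightarrow> nat \<Rightarrow> nat set" where
  "ancestors xs l = {j. j \<noteq> l \<and> find (\<lambda>y. y \<in> key_interval l j) xs = Some j}"

lemma ancestors_subset: "ancestors xs l \<subseteq> set xs - {l}"
  by (auto simp: ancestors_def dest: find_Some_in_set)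

lemma ancestors_Cons_self: "ancestors (l # xs) l = {}"
  by (auto simp: ancestors_def)

lemma ancestors_Cons:
  assumes "x \<noteq> l"
  defines "side \<equiv> if l < x then (\<lambda>y. y < x) else (\<lambda>y. x < y)"
  shows "ancestors (x # xs) l = insert x (ancestors (filter side xs) l)"
proof -
  have side: "side y \<longleftrightarrow> (if l < x then y < x else x < y)" for y
    by (simp add: side_def)
  have outside: "x \<notin> key_interval l j \<longleftrightarrow> side j" if "j \<noteq> x" for j
    using that assms(1) by (auto simp: key_interval_def side)
  have find_side: "find (\<lambda>y. y \<in> key_interval l j) (filter side xs) = find (\<lambda>y. y \<in> key_interval l j) xs"
    if "side j" for j
    using that assms(1) by (intro find_filter) (auto simp: key_interval_def side)
  have "j \<in> ancestors (x # xs) l \<longleftrightarrow> j \<in> insert x (ancestors (filter side xs) l)" for j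
  proof (cases "j = x")
    case False
    have "side j" if "j \<in> ancestors (filter side xs) l"
      using ancestors_subset[of "filter side xs" l] that by auto
    then show ?thesis
      using False outside[OF False] find_side by (auto simp: ancestors_def)
  qed (use assms(1) in \<open>simp add: ancestors_def\<close>)
  then show ?thesis by blast
qed

lemma key_depth_bst_of_list:
  "distinct xs \<Longrightarrow> l \<in> set xs \<Longrightarrow> key_depth l (bst_of_list xs) = card (ancestors xs l)"
proof (induction "length xs" arbitrary: xs rule: less_induct)
  case less
  then obtain x xs' where xs: "xs = x # xs'" by (cases xs) auto
  show ?case
  proof (cases "x = l")
    case True
    then show ?thesis by (simp add: xs bst_of_list_Cons ancestors_Cons_self)
  next
    case False
    define side where "side = (if l < x then (\<lambda>y. y < x) else (\<lambda>y::nat. x < y))"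
    have "key_depth l (bst_of_list xs) = Suc (key_depth l (bst_of_list (filter side xs')))"
      using False by (auto simp: xs bst_of_list_Cons side_def)
    also have "key_depth l (bst_of_list (filter side xs')) = card (ancestors (filter side xs') l)"
      using less False by (intro less.hyps) (auto simp: xs side_def le_imp_less_Suc length_filter_le)
    also have "Suc \<dots> = card (ancestors xs l)"
    proof -
      have "x \<notin> ancestors (filter side xs') l"
        using ancestors_subset[of "filter side xs'" l] by (auto simp: side_def split: if_splits)
      then show ?thesis
        using ancestors_Cons[OF False, of xs'] finite_subset[OF ancestors_subset]
        by (simp add: xs side_def)
    qed
    finally show ?thesis .
  qed
qed

lemma key_interval_subset: "i \<in> {1..n} \<Longrightarrow> j \<in> {1..n} \<Longrightarrow> key_interval i j \<subseteq> {1..n}"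
  by (auto simp: key_interval_def)

context
  fixes n l j :: nat and xs :: "nat list"
  assumes l: "l \<in> {1..n}" and j: "j \<in> {1..n}" "j \<noteq> l"
    and xs: "xs \<in> permutations_of_set {1..n}"
begin

lemma filter_promote_key_interval:
  "filter (\<lambda>y. y \<in> key_interval l j) (promote (key_interval l j) j xs) =
     j # remove1 j (filter (\<lambda>y. y \<in> key_interval l j) xs)"
  using key_interval_subset[OF l j(1)] by (intro filter_promote[OF _ _ _ xs]) auto

lemma mem_ancestors_promote: "j \<in> ancestors (promote (key_interval l j) j xs) l"
  using filter_promote_key_interval j(2) by (simp add: ancestors_def find_conv_filter)

lemma refill_conds_promote_key_interval:
  "length (j # remove1 j (filter (\<lambda>y. y \<in> key_interval l j) xs)) =
     length (filter (\<lambda>y. y \<in> key_interval l j) xs)"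
  "\<forall>y\<in>set (j # remove1 j (filter (\<lambda>y. y \<in> key_interval l j) xs)). y \<in> key_interval l j"
  using key_interval_subset[OF l j(1)] by (intro promote_refill_conds[OF _ _ _ xs]; simp)+

lemma mem_ancestors_promote_same_side:
  assumes "k \<noteq> j" "k < l \<longleftrightarrow> j < l"
  shows "k \<in> ancestors (promote (key_interval l j) j xs) l \<longleftrightarrow> k \<in> ancestors xs l"
proof (cases "k = l")
  case False
  let ?Q = "\<lambda>y. y \<in> key_interval l j" and ?K = "\<lambda>y. y \<in> key_interval l k"
  have "find ?K (promote (key_interval l j) j xs) = Some k \<longleftrightarrow> find ?K xs = Some k"
  proof (cases "k \<in> key_interval l j")
    case True
    then have K_Q: "key_interval l k \<subseteq> key_interval l j" and "j \<notin> key_interval l k"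
      using assms False j(2) by (auto simp: key_interval_def)
    have "find ?K (promote (key_interval l j) j xs) = find ?K (filter ?Q (promote (key_interval l j) j xs))"
      using K_Q by (intro find_filter[symmetric]) auto
    also have "\<dots> = find ?K xs"
      using K_Q \<open>j \<notin> key_interval l k\<close>
      by (simp add: filter_promote_key_interval find_remove1 find_filter subset_iff)
    finally show ?thesis by simp
  next
    case outside: False
    have "key_interval l j \<subseteq> key_interval l k"
      using assms False outside j(2) by (auto simp: key_interval_def)
    then show ?thesis
      unfolding promote_def
      by (intro find_refill_iff[OF refill_conds_promote_key_interval]) (use outside in auto)
  qed
  then show ?thesis using False by (simp add: ancestors_def)
qed (simp add: ancestors_def)

lemma mem_ancestors_promote_opposite_side:
  assumes "k \<in> ancestors xs l" "\<not> (k < l \<longleftrightarrow> j < l)"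
  shows "k \<in> ancestors (promote (key_interval l j) j xs) l"
proof -
  let ?Q = "\<lambda>y. y \<in> key_interval l j" and ?K = "\<lambda>y. y \<in> key_interval l k"
  have k: "k \<noteq> l" "find ?K xs = Some k" using assms(1) by (auto simp: ancestors_def)
  then have "key_interval l j \<inter> key_interval l k = {l}" "k \<notin> key_interval l j"
    using assms(2) j(2) by (auto simp: key_interval_def)
  moreover have "l \<in> set (take i (filter ?Q xs))"
    if "l \<in> set (take i (j # remove1 j (filter ?Q xs)))" for i
    using that j(2) set_take_remove1_subset[of "i - 1" j "filter ?Q xs"] by (cases i) auto
  ultimately have "find ?K (promote (key_interval l j) j xs) = Some k"
    unfolding promote_def
    by (intro find_refill_later[OF refill_conds_promote_key_interval, where l = l]) (use k in auto)
  then show ?thesis using k(1) by (simp add: ancestors_def)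
qed

lemma ancestors_promote_mono: "ancestors xs l - {j} \<subseteq> ancestors (promote (key_interval l j) j xs) l"
  using mem_ancestors_promote_same_side mem_ancestors_promote_opposite_side by blast

end

section \<open>The Poisson Stein equation\<close>

(* For k = 0 the sum is empty, so stein_solution \<mu> h 0 = 0 despite fact (0 - 1) = 1. *)
definition stein_solution :: "real \<Rightarrow> (nat \<Rightarrow> real) \<Rightarrow> nat \<Rightarrow> real" where
  "stein_solution \<mu> h k = fact (k - 1) / \<mu> ^ k * (\<Sum>i<k. \<mu> ^ i / fact i * h i)"

lemma stein_solution_eq:
  assumes "\<mu> > 0"
  shows "\<mu> * stein_solution \<mu> h (Suc k) - real k * stein_solution \<mu> h k = h k"
proof -
  have "\<mu> * stein_solution \<mu> h (Suc k) = fact k / \<mu> ^ k * (\<Sum>i<k. \<mu> ^ i / fact i * h i) + h k"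
    using assms by (simp add: stein_solution_def field_simps)
  moreover have "real k * stein_solution \<mu> h k = fact k / \<mu> ^ k * (\<Sum>i<k. \<mu> ^ i / fact i * h i)"
    by (cases k) (simp_all add: stein_solution_def)
  ultimately show ?thesis by simp
qed

lemma abs_stein_solution_le:
  assumes "\<mu> > 0" "\<And>i. \<bar>h i\<bar> \<le> 1"
  shows "\<bar>stein_solution \<mu> h k\<bar> \<le> stein_solution \<mu> (\<lambda>_. 1) k"
proof -
  have "\<bar>\<mu> ^ i / fact i * h i\<bar> \<le> \<mu> ^ i / fact i" for i
  proof -
    have "\<bar>\<mu> ^ i / fact i * h i\<bar> = \<mu> ^ i / fact i * \<bar>h i\<bar>"
      using assms(1) by (simp add: abs_mult)
    also have "\<dots> \<le> \<mu> ^ i / fact i * 1"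
      using assms by (intro mult_left_mono) auto
    finally show ?thesis by simp
  qed
  then have "\<bar>\<Sum>i<k. \<mu> ^ i / fact i * h i\<bar> \<le> (\<Sum>i<k. \<mu> ^ i / fact i)"
    by (intro order.trans[OF sum_abs] sum_mono)
  from mult_left_mono[OF this, of "fact (k - 1) / \<mu> ^ k"] assms(1) show ?thesis
    unfolding stein_solution_def abs_mult by simp
qed

lemma stein_solution_one_below_mean:
  assumes "\<mu> > 0" "k \<ge> 1"
  shows "(\<mu> - real k) * stein_solution \<mu> (\<lambda>_. 1) k \<le> 1"
  using assms(2)
proof (induction k rule: dec_induct)
  case base
  show ?case using assms(1) by (simp add: stein_solution_def divide_le_eq)
next
  case (step k)
  let ?g = "stein_solution \<mu> (\<lambda>_. 1)"
  have g_nonneg: "?g i \<ge> 0" for i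
    using assms(1) by (simp add: stein_solution_def sum_nonneg)
  show ?case
  proof (cases "real (Suc k) \<ge> \<mu>")
    case True
    then have "(\<mu> - real (Suc k)) * ?g (Suc k) \<le> 0"
      using g_nonneg by (intro mult_nonpos_nonneg) auto
    then show ?thesis by simp
  next
    case False
    then have gap: "\<mu> - real k - 1 > 0" by simp
    have "?g k \<le> 1 / (\<mu> - real k)"
      using step.IH gap by (simp add: pos_le_divide_eq mult.commute)
    then have le: "real k * ?g k + 1 \<le> real k * (1 / (\<mu> - real k)) + 1"
      by (intro add_right_mono mult_left_mono) auto
    have "?g (Suc k) = (real k * ?g k + 1) / \<mu>"
      using stein_solution_eq[OF assms(1), of "\<lambda>_. 1" k] assms(1) by (simp add: field_simps)
    then have "(\<mu> - real (Suc k)) * ?g (Suc k) = (\<mu> - real k - 1) * (real k * ?g k + 1) / \<mu>"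
      by simp
    also have "\<dots> \<le> (\<mu> - real k - 1) * (real k * (1 / (\<mu> - real k)) + 1) / \<mu>"
      using le gap assms(1) by (intro divide_right_mono mult_left_mono) auto
    also have "\<dots> = (\<mu> - real k - 1) / (\<mu> - real k)"
      using gap assms(1) by (simp add: field_simps)
    also have "\<dots> \<le> 1" using gap by simp
    finally show ?thesis .
  qed
qed

lemma poisson_weight_shift_le:
  assumes "\<mu> \<ge> 0"
  shows "\<mu> ^ (i + k) / fact (i + k) \<le> \<mu> ^ k / fact k * (\<mu> / (real k + 1)) ^ i"
proof (induction i)
  case (Suc i)
  have "\<mu> ^ (Suc i + k) / fact (Suc i + k) = \<mu> ^ (i + k) / fact (i + k) * (\<mu> / (real (i + k) + 1))"
    by (simp add: field_simps)
  also have "\<dots> \<le> \<mu> ^ k / fact k * (\<mu> / (real k + 1)) ^ i * (\<mu> / (real k + 1))"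
    using Suc.IH assms by (intro mult_mono divide_left_mono) auto
  also have "\<dots> = \<mu> ^ k / fact k * (\<mu> / (real k + 1)) ^ Suc i" by simp
  finally show ?case .
qed simp

(* The initial segment equals minus the tail, which a geometric series with ratio \<mu> / (k + 1) dominates. *)
lemma abs_sum_poisson_weights_le:
  assumes \<mu>: "\<mu> > 0" and h: "\<And>i. \<bar>h i\<bar> \<le> 1"
    and centred: "(\<lambda>i. \<mu> ^ i / fact i * h i) sums 0" and k: "real k > \<mu>"
  shows "\<bar>\<Sum>i<k. \<mu> ^ i / fact i * h i\<bar> \<le> \<mu> ^ k / fact k * ((real k + 1) / (real k + 1 - \<mu>))"
proof -
  let ?c = "\<lambda>i. \<mu> ^ i / fact i * h i" and ?q = "\<mu> / (real k + 1)"
  have "norm ?q < 1" using \<mu> k by simp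
  moreover have "1 / (1 - ?q) = (real k + 1) / (real k + 1 - \<mu>)"
    using k by (simp add: field_simps)
  ultimately have geom: "(\<lambda>i. \<mu> ^ k / fact k * ?q ^ i) sums (\<mu> ^ k / fact k * ((real k + 1) / (real k + 1 - \<mu>)))"
    using sums_mult[OF geometric_sums] by (metis divide_inverse mult_1)
  have tail_bound: "norm (?c (i + k)) \<le> \<mu> ^ k / fact k * ?q ^ i" for i
  proof -
    have "norm (?c (i + k)) = \<mu> ^ (i + k) / fact (i + k) * \<bar>h (i + k)\<bar>"
      using \<mu> by (simp add: abs_mult)
    also have "\<dots> \<le> \<mu> ^ (i + k) / fact (i + k) * 1" using h \<mu> by (intro mult_left_mono) auto
    also have "\<dots> \<le> \<mu> ^ k / fact k * ?q ^ i" using poisson_weight_shift_le \<mu> by simp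
    finally show ?thesis .
  qed
  have "\<bar>\<Sum>i<k. ?c i\<bar> = norm (\<Sum>i. ?c (i + k))"
    using sums_split_initial_segment[OF centred, of k] by (simp add: sums_iff)
  also have "\<dots> \<le> (\<Sum>i. \<mu> ^ k / fact k * ?q ^ i)"
    using tail_bound sums_summable[OF geom] by (rule norm_suminf_le)
  also have "\<dots> = \<mu> ^ k / fact k * ((real k + 1) / (real k + 1 - \<mu>))"
    using geom by (simp add: sums_iff)
  finally show ?thesis .
qed

lemma stein_solution_above_mean:
  assumes \<mu>: "\<mu> > 0" and h: "\<And>i. \<bar>h i\<bar> \<le> 1"
    and centred: "(\<lambda>i. \<mu> ^ i / fact i * h i) sums 0" and k: "real k > \<mu>"
  shows "(real k - \<mu>) * \<bar>stein_solution \<mu> h k\<bar> \<le> 2"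
proof -
  have k1: "k \<ge> 1" using k \<mu> by (cases k) auto
  have "\<bar>stein_solution \<mu> h k\<bar> = fact (k - 1) / \<mu> ^ k * \<bar>\<Sum>i<k. \<mu> ^ i / fact i * h i\<bar>"
    using \<mu> by (simp add: stein_solution_def abs_mult)
  also have "\<dots> \<le> fact (k - 1) / \<mu> ^ k * (\<mu> ^ k / fact k * ((real k + 1) / (real k + 1 - \<mu>)))"
    using abs_sum_poisson_weights_le[OF assms] \<mu> by (intro mult_left_mono) auto
  also have "\<dots> = fact (k - 1) / fact k * ((real k + 1) / (real k + 1 - \<mu>))"
    using \<mu> by simp
  also have "fact (k - 1) / fact k = 1 / (real k :: real)"
    using k1 by (simp add: fact_reduce[of k])
  finally have "(real k - \<mu>) * \<bar>stein_solution \<mu> h k\<bar> \<le> (real k - \<mu>) * (1 / real k * ((real k + 1) / (real k + 1 - \<mu>)))"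
    using k by (intro mult_left_mono) auto
  also have "\<dots> = (real k - \<mu>) / (real k + 1 - \<mu>) * ((real k + 1) / real k)"
    by (simp add: mult_ac)
  also have "\<dots> \<le> 1 * ((real k + 1) / real k)"
    using k k1 by (intro mult_right_mono) auto
  also have "\<dots> \<le> 2" using k1 by (simp add: divide_le_eq)
  finally show ?thesis .
qed

(* By the Stein equation the increment is (h k + (k - \<mu>) g k) / \<mu>, and |(k - \<mu>) g k| \<le> 2. *)
lemma stein_solution_increment:
  assumes \<mu>: "\<mu> > 0" and h: "\<And>i. \<bar>h i\<bar> \<le> 1"
    and centred: "(\<lambda>i. \<mu> ^ i / fact i * h i) sums 0" and k: "k \<ge> 1"
  shows "\<bar>stein_solution \<mu> h (Suc k) - stein_solution \<mu> h k\<bar> \<le> 3 / \<mu>"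
proof -
  have eq: "stein_solution \<mu> h (Suc k) - stein_solution \<mu> h k = (h k + (real k - \<mu>) * stein_solution \<mu> h k) / \<mu>"
    using stein_solution_eq[OF \<mu>, of h k] \<mu> by (simp add: field_simps)
  have "\<bar>(real k - \<mu>) * stein_solution \<mu> h k\<bar> \<le> 2"
  proof (cases "real k > \<mu>")
    case True
    then show ?thesis using stein_solution_above_mean[OF \<mu> h centred True] by (simp add: abs_mult)
  next
    case False
    then have "\<bar>(real k - \<mu>) * stein_solution \<mu> h k\<bar> = (\<mu> - real k) * \<bar>stein_solution \<mu> h k\<bar>"
      by (simp add: abs_mult)
    also have "\<dots> \<le> (\<mu> - real k) * stein_solution \<mu> (\<lambda>_. 1) k"
      using False abs_stein_solution_le[OF \<mu> h] by (intro mult_left_mono) auto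
    also have "\<dots> \<le> 1" by (rule stein_solution_one_below_mean[OF \<mu> k])
    finally show ?thesis by simp
  qed
  then have "\<bar>h k + (real k - \<mu>) * stein_solution \<mu> h k\<bar> \<le> 3"
    using h[of k] by linarith
  then show ?thesis using \<mu> by (simp add: eq abs_divide divide_right_mono)
qed

lemma stein_solution_lipschitz:
  assumes \<mu>: "\<mu> > 0" and h: "\<And>i. \<bar>h i\<bar> \<le> 1"
    and centred: "(\<lambda>i. \<mu> ^ i / fact i * h i) sums 0" and "a \<ge> 1" "b \<ge> 1"
  shows "\<bar>stein_solution \<mu> h a - stein_solution \<mu> h b\<bar> \<le> 3 / \<mu> * \<bar>real a - real b\<bar>"
proof -
  have shift: "\<bar>stein_solution \<mu> h (a + d) - stein_solution \<mu> h a\<bar> \<le> 3 / \<mu> * real d" if "a \<ge> 1" for a d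
  proof (induction d)
    case (Suc d)
    have "\<bar>stein_solution \<mu> h (Suc (a + d)) - stein_solution \<mu> h (a + d)\<bar> \<le> 3 / \<mu>"
      using that by (intro stein_solution_increment[OF \<mu> h centred]) simp
    then show ?case using Suc.IH by (simp add: distrib_left)
  qed simp
  show ?thesis
  proof (cases "a \<le> b")
    case True
    then show ?thesis using shift[OF \<open>a \<ge> 1\<close>, of "b - a"] by (simp add: abs_minus_commute)
  next
    case False
    then show ?thesis using shift[OF \<open>b \<ge> 1\<close>, of "a - b"] by simp
  qed
qed

section \<open>Distance to a Poisson distribution\<close>

lemma exp_series_sums: "(\<lambda>k. \<mu> ^ k / fact k) sums exp (\<mu> :: real)"
  using exp_converges[of \<mu>] by (simp add: divide_inverse mult.commute scaleR_conv_of_real)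

lemma po_nonneg: "\<mu> \<ge> 0 \<Longrightarrow> po \<mu> k \<ge> 0"
  by (simp add: po_def)

lemma po_sums: "(\<lambda>k. po \<mu> k) sums 1"
  using sums_mult2[OF exp_series_sums[of \<mu>], of "exp (- \<mu>)"]
  by (simp add: po_def exp_minus field_simps)

lemma sum_po_le_1:
  assumes "\<mu> \<ge> 0" "finite B"
  shows "(\<Sum>k\<in>B. po \<mu> k) \<le> 1"
proof -
  have "(\<Sum>k\<in>B. po \<mu> k) \<le> (\<Sum>k. po \<mu> k)"
    using po_sums[of \<mu>] po_nonneg[OF assms(1)] assms(2) by (intro sum_le_suminf) (auto simp: sums_iff)
  then show ?thesis using po_sums[of \<mu>] by (simp add: sums_iff)
qed

lemma pmf_sums_1: "finite (set_pmf M) \<Longrightarrow> (\<lambda>k. pmf M k) sums 1"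
  using sums_finite[of "set_pmf M" "pmf M"] sum_pmf_eq_1[of "set_pmf M" M]
  by (simp add: set_pmf_iff)

lemma dTV_po_eq_excess:
  assumes "\<mu> \<ge> 0" "finite (set_pmf M)"
  shows "dTV M (po \<mu>) = (\<Sum>k | k \<in> set_pmf M \<and> po \<mu> k < pmf M k. pmf M k - po \<mu> k)"
proof -
  define B where "B = {k \<in> set_pmf M. po \<mu> k < pmf M k}"
  have finite_B: "finite B" using assms(2) by (simp add: B_def)
  have "\<bar>pmf M k - po \<mu> k\<bar> = 2 * (if k \<in> B then pmf M k - po \<mu> k else 0) - (pmf M k - po \<mu> k)" for k
    using po_nonneg[OF assms(1), of k] by (auto simp: B_def set_pmf_iff)
  moreover have "(\<lambda>k. 2 * (if k \<in> B then pmf M k - po \<mu> k else 0) - (pmf M k - po \<mu> k))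
      sums (2 * (\<Sum>k\<in>B. pmf M k - po \<mu> k) - (1 - 1))"
    by (intro sums_diff sums_mult sums_If_finite_set finite_B pmf_sums_1 po_sums assms(2))
  ultimately show ?thesis by (simp add: dTV_def sums_iff B_def)
qed

lemma dTV_po_le_1:
  assumes "\<mu> \<ge> 0" "finite (set_pmf M)"
  shows "dTV M (po \<mu>) \<le> 1"
proof -
  let ?B = "{k \<in> set_pmf M. po \<mu> k < pmf M k}"
  have "dTV M (po \<mu>) \<le> (\<Sum>k\<in>?B. pmf M k)"
    unfolding dTV_po_eq_excess[OF assms] using po_nonneg[OF assms(1)] by (intro sum_mono) auto
  also have "\<dots> = measure_pmf.prob M ?B"
    using assms(2) by (simp add: measure_measure_pmf_finite)
  finally show ?thesis by (simp add: order.trans[OF _ measure_pmf.prob_le_1])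
qed

(* The test function is the indicator of the excess set of M over Po \<mu>, minus its Poisson mass. *)
lemma dTV_po_le_test_functions:
  assumes "\<mu> > 0" "finite (set_pmf M)"
    and test: "\<And>h. (\<And>i. \<bar>h i\<bar> \<le> 1) \<Longrightarrow> (\<lambda>i. \<mu> ^ i / fact i * h i) sums 0 \<Longrightarrow>
                 measure_pmf.expectation M h \<le> C"
  shows "dTV M (po \<mu>) \<le> C"
proof -
  define B where "B = {k \<in> set_pmf M. po \<mu> k < pmf M k}"
  define q where "q = (\<Sum>k\<in>B. po \<mu> k)"
  define h where "h i = (if i \<in> B then 1 else 0) - q" for i
  have finite_B: "finite B" using assms(2) by (simp add: B_def)
  have q: "0 \<le> q" "q \<le> 1"
    using po_nonneg[of \<mu>] sum_po_le_1[OF _ finite_B, of \<mu>] assms(1) by (auto simp: q_def sum_nonneg)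
  have "(\<lambda>i. (if i \<in> B then \<mu> ^ i / fact i else 0) - \<mu> ^ i / fact i * q)
      sums ((\<Sum>i\<in>B. \<mu> ^ i / fact i) - exp \<mu> * q)"
    by (intro sums_diff sums_If_finite_set finite_B sums_mult2 exp_series_sums)
  moreover have "(\<Sum>i\<in>B. \<mu> ^ i / fact i) = exp \<mu> * q"
    by (simp add: q_def po_def sum_distrib_left exp_minus field_simps)
  moreover have "(\<lambda>i. \<mu> ^ i / fact i * h i) = (\<lambda>i. (if i \<in> B then \<mu> ^ i / fact i else 0) - \<mu> ^ i / fact i * q)"
    by (simp add: h_def fun_eq_iff right_diff_distrib)
  ultimately have "(\<lambda>i. \<mu> ^ i / fact i * h i) sums 0"
    by simp
  moreover have "\<bar>h i\<bar> \<le> 1" for i using q by (simp add: h_def)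
  ultimately have "measure_pmf.expectation M h \<le> C" by (rule test[rotated])
  moreover have "measure_pmf.expectation M h = (\<Sum>k\<in>set_pmf M. h k * pmf M k)"
    using assms(2) by (intro integral_measure_pmf_real) auto
  moreover have "(\<Sum>k\<in>set_pmf M. h k * pmf M k) = dTV M (po \<mu>)"
  proof -
    have "h k * pmf M k = (if k \<in> B then pmf M k else 0) - q * pmf M k" for k
      by (simp add: h_def algebra_simps)
    then have "(\<Sum>k\<in>set_pmf M. h k * pmf M k) =
        (\<Sum>k\<in>set_pmf M. if k \<in> B then pmf M k else 0) - q * (\<Sum>k\<in>set_pmf M. pmf M k)"
      by (simp add: sum_subtractf sum_distrib_left)
    also have "(\<Sum>k\<in>set_pmf M. if k \<in> B then pmf M k else 0) = (\<Sum>k\<in>B. pmf M k)"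
      using assms(2) by (simp add: sum.If_cases B_def Collect_conj_eq)
    also have "(\<Sum>k\<in>set_pmf M. pmf M k) = 1"
      using assms(2) by (simp add: sum_pmf_eq_1)
    finally show ?thesis
      using assms by (simp add: dTV_po_eq_excess q_def sum_subtractf flip: B_def)
  qed
  ultimately show ?thesis by simp
qed

section \<open>Monotone couplings\<close>

lemma sum_sum_split_diagonal:
  "finite J \<Longrightarrow> (\<Sum>j\<in>J. \<Sum>k\<in>J. f j k) = (\<Sum>j\<in>J. f j j) + (\<Sum>j\<in>J. \<Sum>k\<in>J - {j}. f j k)"
  for f :: "'a \<Rightarrow> 'a \<Rightarrow> 'b :: comm_monoid_add"
  by (simp add: sum.remove sum.distrib)

(* For uniform \<omega> \<in> \<Omega>, card (A \<omega>) is a sum of the indicators of the events j \<in> A \<omega>, of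
   probabilities p j.  By size_bias, \<sigma> j \<omega> has the law of \<omega> conditioned on j \<in> A \<omega>;
   by the last two assumptions this coupling is monotone in the sense of Barbour, Holst and Janson. *)
locale monotone_coupling =
  fixes \<Omega> :: "'a set" and J :: "'j set" and A :: "'a \<Rightarrow> 'j set"
    and \<sigma> :: "'j \<Rightarrow> 'a \<Rightarrow> 'a" and p :: "'j \<Rightarrow> real"
  assumes finite_\<Omega>: "finite \<Omega>" and \<Omega>_nonempty: "\<Omega> \<noteq> {}" and finite_J: "finite J"
    and A_subset: "\<omega> \<in> \<Omega> \<Longrightarrow> A \<omega> \<subseteq> J"
    and \<sigma>_in: "j \<in> J \<Longrightarrow> \<omega> \<in> \<Omega> \<Longrightarrow> \<sigma> j \<omega> \<in> \<Omega>"
    and size_bias: "j \<in> J \<Longrightarrow> (\<Sum>\<omega>\<in>\<Omega>. of_bool (j \<in> A \<omega>) * f \<omega>) = p j * (\<Sum>\<omega>\<in>\<Omega>. f (\<sigma> j \<omega>))"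
    and mem_A_\<sigma>: "j \<in> J \<Longrightarrow> \<omega> \<in> \<Omega> \<Longrightarrow> j \<in> A (\<sigma> j \<omega>)"
    and A_\<sigma>_mono: "j \<in> J \<Longrightarrow> \<omega> \<in> \<Omega> \<Longrightarrow> A \<omega> - {j} \<subseteq> A (\<sigma> j \<omega>)"
begin

definition coupling_error :: real where
  "coupling_error = (\<Sum>j\<in>J. p j ^ 2) +
     (\<Sum>j\<in>J. \<Sum>k\<in>J - {j}. real (card {\<omega> \<in> \<Omega>. j \<in> A \<omega> \<and> k \<in> A \<omega>}) / card \<Omega> - p j * p k)"

lemma card_mem_A: "j \<in> J \<Longrightarrow> real (card {\<omega> \<in> \<Omega>. j \<in> A \<omega>}) = p j * card \<Omega>"
  using size_bias[of j "\<lambda>_. 1"] finite_\<Omega> by (simp add: Collect_conj_eq Int_commute)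

lemma p_nonneg: "j \<in> J \<Longrightarrow> p j \<ge> 0"
  using card_mem_A[of j] finite_\<Omega> \<Omega>_nonempty
  by (metis card_gt_0_iff of_nat_0_le_iff of_nat_0_less_iff zero_le_mult_iff not_less)

lemma card_A_eq_sum: "\<omega> \<in> \<Omega> \<Longrightarrow> real (card (A \<omega>)) = (\<Sum>j\<in>J. of_bool (j \<in> A \<omega>))"
  using A_subset[of \<omega>] finite_J by (simp add: Int_absorb1)

lemma sum_card_A: "(\<Sum>\<omega>\<in>\<Omega>. real (card (A \<omega>))) = card \<Omega> * (\<Sum>j\<in>J. p j)"
proof -
  have "(\<Sum>\<omega>\<in>\<Omega>. real (card (A \<omega>))) = (\<Sum>j\<in>J. \<Sum>\<omega>\<in>\<Omega>. of_bool (j \<in> A \<omega>))"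
    by (simp add: card_A_eq_sum sum.swap[of _ J] del: sum_of_bool_eq)
  also have "\<dots> = (\<Sum>j\<in>J. p j * card \<Omega>)"
    using finite_\<Omega> by (intro sum.cong refl) (simp add: card_mem_A[symmetric] Collect_conj_eq Int_commute)
  finally show ?thesis by (simp add: sum_distrib_right mult.commute)
qed

lemma sum_card_A_squared:
  "(\<Sum>\<omega>\<in>\<Omega>. real (card (A \<omega>)) ^ 2) = (\<Sum>j\<in>J. \<Sum>k\<in>J. real (card {\<omega> \<in> \<Omega>. j \<in> A \<omega> \<and> k \<in> A \<omega>}))"
proof -
  have "(\<Sum>\<omega>\<in>\<Omega>. real (card (A \<omega>)) ^ 2) = (\<Sum>\<omega>\<in>\<Omega>. \<Sum>j\<in>J. \<Sum>k\<in>J. of_bool (j \<in> A \<omega> \<and> k \<in> A \<omega>))"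
    by (intro sum.cong refl) (simp add: card_A_eq_sum power2_eq_square sum_product of_bool_conj del: sum_of_bool_eq)
  also have "\<dots> = (\<Sum>j\<in>J. \<Sum>k\<in>J. \<Sum>\<omega>\<in>\<Omega>. of_bool (j \<in> A \<omega> \<and> k \<in> A \<omega>))"
    by (simp only: sum.swap[of _ \<Omega>])
  also have "\<dots> = (\<Sum>j\<in>J. \<Sum>k\<in>J. real (card {\<omega> \<in> \<Omega>. j \<in> A \<omega> \<and> k \<in> A \<omega>}))"
    using finite_\<Omega> by (simp add: Collect_conj_eq Int_assoc)
  finally show ?thesis .
qed

lemma sum_size_biased_card_A:
  "(\<Sum>j\<in>J. p j * (\<Sum>\<omega>\<in>\<Omega>. real (card (A (\<sigma> j \<omega>))))) = (\<Sum>\<omega>\<in>\<Omega>. real (card (A \<omega>)) ^ 2)"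
proof -
  have "(\<Sum>j\<in>J. p j * (\<Sum>\<omega>\<in>\<Omega>. real (card (A (\<sigma> j \<omega>))))) =
      (\<Sum>j\<in>J. \<Sum>\<omega>\<in>\<Omega>. of_bool (j \<in> A \<omega>) * real (card (A \<omega>)))"
    by (intro sum.cong refl size_bias[symmetric])
  also have "\<dots> = (\<Sum>\<omega>\<in>\<Omega>. (\<Sum>j\<in>J. of_bool (j \<in> A \<omega>)) * real (card (A \<omega>)))"
    by (simp only: sum.swap[of _ J] sum_distrib_right)
  also have "\<dots> = (\<Sum>\<omega>\<in>\<Omega>. real (card (A \<omega>)) ^ 2)"
    by (intro sum.cong refl) (simp add: card_A_eq_sum[symmetric] power2_eq_square del: sum_of_bool_eq)
  finally show ?thesis .
qed

lemma card_A_\<sigma>_ge: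
  assumes "j \<in> J" "\<omega> \<in> \<Omega>"
  shows "real (card (A \<omega>)) + 1 - of_bool (j \<in> A \<omega>) \<le> real (card (A (\<sigma> j \<omega>)))"
proof -
  have finite_A: "finite (A \<omega>')" if "\<omega>' \<in> \<Omega>" for \<omega>'
    using A_subset[OF that] finite_J by (rule finite_subset)
  have "card (A \<omega> - {j}) \<le> card (A (\<sigma> j \<omega>) - {j})"
    using A_\<sigma>_mono[OF assms] finite_A[OF \<sigma>_in[OF assms]] by (intro card_mono) auto
  moreover have "card (A (\<sigma> j \<omega>)) = Suc (card (A (\<sigma> j \<omega>) - {j}))"
    using mem_A_\<sigma>[OF assms] finite_A[OF \<sigma>_in[OF assms]] by (rule card.remove[rotated])
  moreover have "card (A \<omega>) = card (A \<omega> - {j}) + of_bool (j \<in> A \<omega>)"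
    using finite_A[OF assms(2)] card.remove[of "A \<omega>" j] by auto
  ultimately show ?thesis by simp
qed

lemma card_A_\<sigma>_pos: "j \<in> J \<Longrightarrow> \<omega> \<in> \<Omega> \<Longrightarrow> card (A (\<sigma> j \<omega>)) \<ge> 1"
  using mem_A_\<sigma> A_subset[OF \<sigma>_in] finite_J
  by (metis One_nat_def Suc_leI card_gt_0_iff empty_iff finite_subset)

lemma stein_identity:
  "(\<Sum>\<omega>\<in>\<Omega>. (\<Sum>j\<in>J. p j) * g (Suc (card (A \<omega>))) - real (card (A \<omega>)) * g (card (A \<omega>))) =
     (\<Sum>j\<in>J. p j * (\<Sum>\<omega>\<in>\<Omega>. g (Suc (card (A \<omega>))) - g (card (A (\<sigma> j \<omega>)))))"
proof -
  have "(\<Sum>\<omega>\<in>\<Omega>. real (card (A \<omega>)) * g (card (A \<omega>))) =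
      (\<Sum>j\<in>J. \<Sum>\<omega>\<in>\<Omega>. of_bool (j \<in> A \<omega>) * g (card (A \<omega>)))"
    by (simp add: card_A_eq_sum sum_distrib_right sum.swap[of _ J] del: sum_of_bool_eq sum_of_bool_mult_eq)
  also have "\<dots> = (\<Sum>j\<in>J. p j * (\<Sum>\<omega>\<in>\<Omega>. g (card (A (\<sigma> j \<omega>)))))"
    by (intro sum.cong refl size_bias)
  finally show ?thesis
    by (simp add: sum_subtractf right_diff_distrib sum_distrib_left sum_distrib_right sum.swap[of _ J])
qed

lemma coupling_error_eq:
  "(\<Sum>j\<in>J. p j * (\<Sum>\<omega>\<in>\<Omega>. real (card (A (\<sigma> j \<omega>))) - real (card (A \<omega>)) - 1 + 2 * of_bool (j \<in> A \<omega>))) =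
     card \<Omega> * coupling_error"
  (is "?lhs = _")
proof -
  let ?N = "real (card \<Omega>)" and ?W = "\<lambda>\<omega>. real (card (A \<omega>))"
  let ?c = "\<lambda>j k. real (card {\<omega> \<in> \<Omega>. j \<in> A \<omega> \<and> k \<in> A \<omega>})"
  let ?S1 = "\<Sum>j\<in>J. p j" and ?S2 = "\<Sum>j\<in>J. p j ^ 2"
  let ?C = "\<Sum>j\<in>J. \<Sum>k\<in>J - {j}. ?c j k" and ?P = "\<Sum>j\<in>J. \<Sum>k\<in>J - {j}. p j * p k"
  have "?lhs = (\<Sum>j\<in>J. p j * (\<Sum>\<omega>\<in>\<Omega>. ?W (\<sigma> j \<omega>))) - (\<Sum>j\<in>J. p j * (\<Sum>\<omega>\<in>\<Omega>. ?W \<omega>))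
      - (\<Sum>j\<in>J. p j * ?N) + 2 * (\<Sum>j\<in>J. p j * (\<Sum>\<omega>\<in>\<Omega>. of_bool (j \<in> A \<omega>)))"
  proof -
    have "p j * (\<Sum>\<omega>\<in>\<Omega>. ?W (\<sigma> j \<omega>) - ?W \<omega> - 1 + 2 * of_bool (j \<in> A \<omega>)) =
        p j * (\<Sum>\<omega>\<in>\<Omega>. ?W (\<sigma> j \<omega>)) - p j * (\<Sum>\<omega>\<in>\<Omega>. ?W \<omega>) - p j * ?N
        + 2 * (p j * (\<Sum>\<omega>\<in>\<Omega>. of_bool (j \<in> A \<omega>)))" for j
      by (simp add: sum.distrib sum_subtractf algebra_simps flip: sum_distrib_left del: sum_of_bool_eq)
    then show ?thesis
      by (simp add: sum.distrib sum_subtractf flip: sum_distrib_left del: sum_of_bool_eq)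
  qed
  also have "(\<Sum>j\<in>J. p j * (\<Sum>\<omega>\<in>\<Omega>. ?W (\<sigma> j \<omega>))) = ?N * ?S1 + ?C"
    unfolding sum_size_biased_card_A sum_card_A_squared sum_sum_split_diagonal[OF finite_J]
    by (simp add: card_mem_A sum_distrib_right mult.commute)
  also have "(\<Sum>j\<in>J. p j * (\<Sum>\<omega>\<in>\<Omega>. ?W \<omega>)) = ?N * (?S2 + ?P)"
  proof -
    have "?S1 * ?S1 = ?S2 + ?P"
      by (simp add: sum_product sum_sum_split_diagonal[OF finite_J] power2_eq_square)
    then show ?thesis by (simp add: sum_card_A flip: sum_distrib_right)
  qed
  also have "(\<Sum>j\<in>J. p j * ?N) = ?N * ?S1"
    by (simp add: sum_distrib_right mult.commute)
  also have "(\<Sum>j\<in>J. p j * (\<Sum>\<omega>\<in>\<Omega>. of_bool (j \<in> A \<omega>))) = ?N * ?S2"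
    using finite_\<Omega>
    by (simp add: card_mem_A[symmetric] Collect_conj_eq Int_commute power2_eq_square sum_distrib_left mult_ac
        cong: sum.cong)
  finally have "?lhs = ?N * ?S2 + (?C - ?N * ?P)" by (simp add: algebra_simps)
  moreover have "?C - ?N * ?P = ?N * (\<Sum>j\<in>J. \<Sum>k\<in>J - {j}. ?c j k / ?N - p j * p k)"
    using finite_\<Omega> \<Omega>_nonempty by (simp add: sum_subtractf sum_distrib_left right_diff_distrib)
  ultimately show ?thesis by (simp add: coupling_error_def distrib_left)
qed

lemma coupled_stein_increment_le:
  assumes \<mu>: "(\<Sum>j\<in>J. p j) > 0" and h: "\<And>i. \<bar>h i\<bar> \<le> 1"
    and centred: "(\<lambda>i. (\<Sum>j\<in>J. p j) ^ i / fact i * h i) sums 0" and "j \<in> J" "\<omega> \<in> \<Omega>"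
  shows "stein_solution (\<Sum>j\<in>J. p j) h (Suc (card (A \<omega>))) - stein_solution (\<Sum>j\<in>J. p j) h (card (A (\<sigma> j \<omega>))) \<le>
    3 / (\<Sum>j\<in>J. p j) * (real (card (A (\<sigma> j \<omega>))) - real (card (A \<omega>)) - 1 + 2 * of_bool (j \<in> A \<omega>))"
proof -
  let ?g = "stein_solution (\<Sum>j\<in>J. p j) h" and ?W = "\<lambda>\<omega>. card (A \<omega>)"
  have lipschitz: "?g (Suc (?W \<omega>)) - ?g (?W (\<sigma> j \<omega>)) \<le>
      3 / (\<Sum>j\<in>J. p j) * \<bar>real (Suc (?W \<omega>)) - real (?W (\<sigma> j \<omega>))\<bar>"
    using card_A_\<sigma>_pos[OF assms(4,5)]
    by (intro order.trans[OF abs_ge_self stein_solution_lipschitz[OF \<mu> h centred]]) simp_all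
  have "\<bar>real (Suc (?W \<omega>)) - real (?W (\<sigma> j \<omega>))\<bar> \<le>
      real (?W (\<sigma> j \<omega>)) - real (?W \<omega>) - 1 + 2 * of_bool (j \<in> A \<omega>)"
    using card_A_\<sigma>_ge[OF assms(4,5)] by (cases "j \<in> A \<omega>") auto
  then show ?thesis
    using \<mu> by (intro order.trans[OF lipschitz] mult_left_mono) auto
qed

theorem dTV_po_le:
  assumes "(\<Sum>j\<in>J. p j) > 0"
  shows "dTV (map_pmf (\<lambda>\<omega>. card (A \<omega>)) (pmf_of_set \<Omega>)) (po (\<Sum>j\<in>J. p j)) \<le>
    3 / (\<Sum>j\<in>J. p j) * coupling_error"
    (is "_ \<le> 3 / ?\<mu> * _")
proof (rule dTV_po_le_test_functions[OF assms])
  let ?W = "\<lambda>\<omega>. card (A \<omega>)" and ?N = "real (card \<Omega>)"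
  show "finite (set_pmf (map_pmf ?W (pmf_of_set \<Omega>)))"
    using finite_\<Omega> \<Omega>_nonempty by simp
  fix h :: "nat \<Rightarrow> real"
  assume h: "\<And>i. \<bar>h i\<bar> \<le> 1" and centred: "(\<lambda>i. ?\<mu> ^ i / fact i * h i) sums 0"
  let ?g = "stein_solution ?\<mu> h"
  have "measure_pmf.expectation (map_pmf ?W (pmf_of_set \<Omega>)) h = (\<Sum>\<omega>\<in>\<Omega>. h (?W \<omega>)) / ?N"
    using finite_\<Omega> \<Omega>_nonempty by (simp add: integral_pmf_of_set)
  also have "(\<Sum>\<omega>\<in>\<Omega>. h (?W \<omega>)) = (\<Sum>\<omega>\<in>\<Omega>. ?\<mu> * ?g (Suc (?W \<omega>)) - real (?W \<omega>) * ?g (?W \<omega>))"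
    by (simp only: stein_solution_eq[OF assms])
  also have "\<dots> = (\<Sum>j\<in>J. p j * (\<Sum>\<omega>\<in>\<Omega>. ?g (Suc (?W \<omega>)) - ?g (?W (\<sigma> j \<omega>))))"
    by (rule stein_identity)
  also have "\<dots> \<le> (\<Sum>j\<in>J. p j * (\<Sum>\<omega>\<in>\<Omega>. 3 / ?\<mu> *
      (real (?W (\<sigma> j \<omega>)) - real (?W \<omega>) - 1 + 2 * of_bool (j \<in> A \<omega>))))"
    using coupled_stein_increment_le[OF assms h centred] p_nonneg by (intro sum_mono mult_left_mono) auto
  also have "\<dots> = 3 / ?\<mu> * (\<Sum>j\<in>J. p j * (\<Sum>\<omega>\<in>\<Omega>.
      real (?W (\<sigma> j \<omega>)) - real (?W \<omega>) - 1 + 2 * of_bool (j \<in> A \<omega>)))"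
    by (simp add: sum_distrib_left mult.left_commute)
  finally show "measure_pmf.expectation (map_pmf ?W (pmf_of_set \<Omega>)) h \<le> 3 / ?\<mu> * coupling_error"
    using finite_\<Omega> \<Omega>_nonempty by (simp add: coupling_error_eq divide_le_eq card_gt_0_iff mult_ac)
qed

end

section \<open>Harmonic sums\<close>

lemma sum_inverse_squares_le_1: "(\<Sum>a=1..N. 1 / (real a + 1) ^ 2) \<le> 1"
proof -
  have "(\<Sum>a=1..N. 1 / (real a + 1) ^ 2) \<le> 1 - 1 / (real N + 1)"
  proof (induction N)
    case (Suc N)
    have "1 / (real N + 2) ^ 2 \<le> 1 / ((real N + 1) * (real N + 2))"
      by (intro divide_left_mono) (auto simp: power2_eq_square intro!: mult_right_mono)
    also have "\<dots> = 1 / (real N + 1) - 1 / (real N + 2)"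
      by (simp add: field_simps)
    finally show ?case using Suc.IH by (simp add: add.commute)
  qed simp
  then show ?thesis by (smt (verit) divide_nonneg_nonneg of_nat_0_le_iff)
qed

lemma sum_inverse_shifted_eq_harm: "(\<Sum>b=1..N. 1 / real (b + m)) = harm (N + m) - harm m"
  by (induction N) (simp_all add: harm_Suc inverse_eq_divide)

lemma sum_inverse_product_le:
  assumes "a \<ge> 1"
  shows "(\<Sum>b=1..N. 1 / ((real b + 1) * (real a + real b + 1))) \<le> (harm (a + 1) - 1) / real a"
proof -
  have partial_fractions: "1 / ((real b + 1) * (real a + real b + 1)) = (1 / real (b + 1) - 1 / real (b + (a + 1))) / real a" for b
  proof -
    have "real b + 1 > 0" "real a + real b + 1 > 0" "real a > 0" using assms by simp_all
    then show ?thesis by (simp add: divide_simps) (simp add: algebra_simps)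
  qed
  have "(\<Sum>b=1..N. 1 / ((real b + 1) * (real a + real b + 1))) =
      (\<Sum>b=1..N. 1 / real (b + 1) - 1 / real (b + (a + 1))) / real a"
    by (simp only: partial_fractions sum_divide_distrib)
  also have "\<dots> = (harm (N + 1) - harm 1 - (harm (N + (a + 1)) - harm (a + 1))) / real a"
    by (simp only: sum_subtractf sum_inverse_shifted_eq_harm)
  also have "\<dots> \<le> (harm (a + 1) - 1) / real a"
    using harm_mono[of "N + 1" "N + (a + 1)", where 'a = real] by (intro divide_right_mono) (auto simp: harm_def)
  finally show ?thesis .
qed

lemma sum_harm_telescope:
  "(\<Sum>a=1..N. (harm (a + 1) - 1) / (real a * (real a + 1))) = 1 - harm (N + 1) / (real N + 1)"
proof -
  let ?f = "\<lambda>a. harm a / real a :: real"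
  have telescoping: "(harm (a + 1) - 1) / (real a * (real a + 1)) = ?f a - ?f (Suc a)" if "a \<ge> 1" for a
  proof -
    have "real a > 0" "real a + 1 > 0" using that by simp_all
    moreover have "harm (Suc a) = harm a + 1 / (real a + 1)"
      by (simp add: harm_Suc inverse_eq_divide add.commute)
    ultimately show ?thesis by (simp add: divide_simps) (simp add: algebra_simps)
  qed
  have "(\<Sum>a=1..N. (harm (a + 1) - 1) / (real a * (real a + 1))) = (\<Sum>a=1..N. ?f a - ?f (Suc a))"
    by (intro sum.cong refl telescoping) simp
  also have "\<dots> = ?f 1 - ?f (Suc N)"
    using sum_Suc_diff[of 1 N ?f] by (simp add: sum_subtractf)
  also have "\<dots> = 1 - harm (N + 1) / (real N + 1)"
    by (simp add: harm_def add.commute)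
  finally show ?thesis .
qed

lemma double_sum_le_1:
  "(\<Sum>a=1..N. \<Sum>b=1..N. 1 / ((real a + 1) * (real b + 1) * (real a + real b + 1))) \<le> 1"
proof -
  have "(\<Sum>a=1..N. \<Sum>b=1..N. 1 / ((real a + 1) * (real b + 1) * (real a + real b + 1))) =
      (\<Sum>a=1..N. 1 / (real a + 1) * (\<Sum>b=1..N. 1 / ((real b + 1) * (real a + real b + 1))))"
    by (simp add: sum_distrib_left mult.assoc)
  also have "\<dots> \<le> (\<Sum>a=1..N. 1 / (real a + 1) * ((harm (a + 1) - 1) / real a))"
    by (intro sum_mono mult_left_mono sum_inverse_product_le) auto
  also have "\<dots> = (\<Sum>a=1..N. (harm (a + 1) - 1) / (real a * (real a + 1)))"
    by (simp add: mult.commute)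
  also have "\<dots> = 1 - harm (N + 1) / (real N + 1)"
    by (rule sum_harm_telescope)
  also have "\<dots> \<le> 1"
    using divide_nonneg_nonneg[OF harm_nonneg[of "N + 1"], of "real N + 1"] by simp
  finally show ?thesis .
qed

section \<open>Depth of a key in a random binary search tree\<close>

definition ancestor_prob :: "nat \<Rightarrow> nat \<Rightarrow> real" where
  "ancestor_prob l j = 1 / real (card (key_interval l j))"

lemma ancestor_prob_pos: "ancestor_prob l j > 0"
  by (simp add: ancestor_prob_def card_key_interval)

lemma eighteen_div_le:
  fixes c L :: real
  assumes "28 \<le> c" "c < L"
  shows "18 / (L - 2) \<le> c / L"
proof -
  have "18 * L \<le> c * (L - 2)"
  proof -
    have "(c - 28) * (L - 2) \<ge> 0" using assms by simp
    then show ?thesis using assms by (simp add: algebra_simps)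
  qed
  then show ?thesis using assms by (simp add: divide_simps mult.commute)
qed

context
  fixes n l :: nat
  assumes l: "l \<in> {1..n}"
begin

lemma sum_of_bool_ancestor:
  assumes "j \<in> {1..n} - {l}"
  shows "(\<Sum>xs\<in>permutations_of_set {1..n}. of_bool (j \<in> ancestors xs l) * f xs) =
           ancestor_prob l j * (\<Sum>xs\<in>permutations_of_set {1..n}. f (promote (key_interval l j) j xs))"
proof -
  let ?S = "key_interval l j"
  have S: "?S \<subseteq> {1..n}" using key_interval_subset l assms by auto
  have "card ?S > 0" by (simp add: card_key_interval)
  moreover have "(\<Sum>xs\<in>permutations_of_set {1..n}. f (promote ?S j xs)) =
      card ?S * (\<Sum>xs\<in>permutations_of_set {1..n}. of_bool (j \<in> ancestors xs l) * f xs)"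
    using sum_promote[OF _ S, of j f] assms
    by (simp add: ancestors_def sum.inter_filter Collect_conj_eq Int_commute)
  ultimately show ?thesis by (simp add: ancestor_prob_def field_simps)
qed

lemma monotone_coupling_ancestors:
  "monotone_coupling (permutations_of_set {1..n}) ({1..n} - {l}) (\<lambda>xs. ancestors xs l)
     (\<lambda>j. promote (key_interval l j) j) (ancestor_prob l)"
proof
  show "ancestors xs l \<subseteq> {1..n} - {l}" if "xs \<in> permutations_of_set {1..n}" for xs
    using ancestors_subset[of xs l] that by (auto simp: permutations_of_set_def)
  show "promote (key_interval l j) j xs \<in> permutations_of_set {1..n}"
    if "j \<in> {1..n} - {l}" "xs \<in> permutations_of_set {1..n}" for j xs
    using that l key_interval_subset by (intro promote_permutation) auto
  show "j \<in> ancestors (promote (key_interval l j) j xs) l"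
    if "j \<in> {1..n} - {l}" "xs \<in> permutations_of_set {1..n}" for j xs
    using that l by (intro mem_ancestors_promote) auto
  show "ancestors xs l - {j} \<subseteq> ancestors (promote (key_interval l j) j xs) l"
    if "j \<in> {1..n} - {l}" "xs \<in> permutations_of_set {1..n}" for j xs
    using that l by (intro ancestors_promote_mono) auto
qed (use sum_of_bool_ancestor in auto)

interpretation ancestors: monotone_coupling "permutations_of_set {1..n}" "{1..n} - {l}"
  "\<lambda>xs. ancestors xs l" "\<lambda>j. promote (key_interval l j) j" "ancestor_prob l"
  by (rule monotone_coupling_ancestors)

lemma card_both_ancestors_same_side:
  assumes j: "j \<in> {1..n} - {l}" and k: "k \<in> {1..n} - {l}" "k \<noteq> j" "k < l \<longleftrightarrow> j < l"
  shows "real (card {xs \<in> permutations_of_set {1..n}. j \<in> ancestors xs l \<and> k \<in> ancestors xs l}) =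
           card (permutations_of_set {1..n}) * (ancestor_prob l j * ancestor_prob l k)"
proof -
  have "real (card {xs \<in> permutations_of_set {1..n}. j \<in> ancestors xs l \<and> k \<in> ancestors xs l}) =
      (\<Sum>xs\<in>permutations_of_set {1..n}. of_bool (j \<in> ancestors xs l) * of_bool (k \<in> ancestors xs l))"
    by (simp add: Collect_conj_eq Int_ac)
  also have "\<dots> = ancestor_prob l j *
      (\<Sum>xs\<in>permutations_of_set {1..n}. of_bool (k \<in> ancestors (promote (key_interval l j) j xs) l))"
    by (rule sum_of_bool_ancestor[OF j])
  also have "(\<Sum>xs\<in>permutations_of_set {1..n}. of_bool (k \<in> ancestors (promote (key_interval l j) j xs) l)) =
      (\<Sum>xs\<in>permutations_of_set {1..n}. of_bool (k \<in> ancestors xs l) :: real)"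
    using j k l by (intro sum.cong refl arg_cong[where f = of_bool] mem_ancestors_promote_same_side) auto
  also have "(\<Sum>xs\<in>permutations_of_set {1..n}. of_bool (k \<in> ancestors xs l) :: real) =
      ancestor_prob l k * card (permutations_of_set {1..n})"
    using ancestors.card_mem_A[OF k(1)] by (simp add: Collect_conj_eq Int_commute)
  finally show ?thesis by (simp add: mult_ac)
qed

lemma card_first_and_ancestor:
  assumes M: "M \<subseteq> {1..n}" and b: "b \<in> {1..n} - {l}" "key_interval l b \<subseteq> M"
    and a: "a \<in> M" "a \<notin> key_interval l b"
  shows "real (card {xs \<in> permutations_of_set {1..n}. find (\<lambda>y. y \<in> M) xs = Some a \<and> b \<in> ancestors xs l}) =
           ancestor_prob l b * (card (permutations_of_set {1..n}) / card M)"
proof -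
  let ?first = "\<lambda>xs. of_bool (find (\<lambda>y. y \<in> M) xs = Some a) :: real"
  have invariant: "?first (promote (key_interval l b) b xs) = ?first xs"
    if "xs \<in> permutations_of_set {1..n}" for xs
  proof -
    have "key_interval l b \<subseteq> {1..n}" using key_interval_subset l b(1) by auto
    then show ?thesis
      unfolding promote_def using b(2) a(2)
      by (subst find_refill_iff[OF promote_refill_conds(1,2)[OF _ _ _ that]]) auto
  qed
  have "real (card {xs \<in> permutations_of_set {1..n}. find (\<lambda>y. y \<in> M) xs = Some a \<and> b \<in> ancestors xs l}) =
      (\<Sum>xs\<in>permutations_of_set {1..n}. of_bool (b \<in> ancestors xs l) * ?first xs)"
    by (simp add: Collect_conj_eq Int_ac)
  also have "\<dots> = ancestor_prob l b * (\<Sum>xs\<in>permutations_of_set {1..n}. ?first (promote (key_interval l b) b xs))"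
    by (rule sum_of_bool_ancestor[OF b(1)])
  also have "(\<Sum>xs\<in>permutations_of_set {1..n}. ?first (promote (key_interval l b) b xs)) =
      (\<Sum>xs\<in>permutations_of_set {1..n}. ?first xs)"
    using invariant by (rule sum.cong[OF refl])
  also have "(\<Sum>xs\<in>permutations_of_set {1..n}. ?first xs) = card (permutations_of_set {1..n}) / card M"
    using card_find_eq_Some[OF _ M a(1)] by (simp add: Collect_conj_eq Int_commute)
  finally show ?thesis .
qed

(* If both j and k are ancestors, the first key of key_interval j k to be inserted is j or k. *)
lemma card_both_ancestors_opposite_sides_le:
  assumes j: "j \<in> {1..n} - {l}" and k: "k \<in> {1..n} - {l}" and opposite: "\<not> (k < l \<longleftrightarrow> j < l)"
  shows "real (card {xs \<in> permutations_of_set {1..n}. j \<in> ancestors xs l \<and> k \<in> ancestors xs l}) \<le>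
           card (permutations_of_set {1..n}) * ((ancestor_prob l j + ancestor_prob l k) / card (key_interval j k))"
proof -
  let ?M = "key_interval j k"
  let ?F = "\<lambda>a b. {xs \<in> permutations_of_set {1..n}. find (\<lambda>y. y \<in> ?M) xs = Some a \<and> b \<in> ancestors xs l}"
  have M: "?M \<subseteq> {1..n}" "?M = key_interval l j \<union> key_interval l k"
    using j k opposite by (auto simp: key_interval_def)
  have "{xs \<in> permutations_of_set {1..n}. j \<in> ancestors xs l \<and> k \<in> ancestors xs l} \<subseteq> ?F j k \<union> ?F k j"
  proof (intro subsetI, elim CollectE conjE)
    fix xs assume xs: "xs \<in> permutations_of_set {1..n}" and anc: "j \<in> ancestors xs l" "k \<in> ancestors xs l"
    obtain m where m: "find (\<lambda>y. y \<in> ?M) xs = Some m"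
      using xs j by (cases "find (\<lambda>y. y \<in> ?M) xs") (auto simp: find_None_iff permutations_of_set_def)
    then have "m \<in> ?M" by (metis find_Some_iff)
    with m have "find (\<lambda>y. y \<in> key_interval l i) xs = Some m" if "m \<in> key_interval l i" "i \<in> {j, k}" for i
      using that M(2) by (induction xs) (auto split: if_splits)
    then have "m = j \<or> m = k" using anc \<open>m \<in> ?M\<close> M(2) by (auto simp: ancestors_def)
    then show "xs \<in> ?F j k \<union> ?F k j" using xs m anc by auto
  qed
  then have "card {xs \<in> permutations_of_set {1..n}. j \<in> ancestors xs l \<and> k \<in> ancestors xs l} \<le>
      card (?F j k) + card (?F k j)"
    by (intro order.trans[OF card_mono card_Un_le]) auto
  then have "real (card {xs \<in> permutations_of_set {1..n}. j \<in> ancestors xs l \<and> k \<in> ancestors xs l}) \<le>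
      real (card (?F j k)) + real (card (?F k j))"
    by linarith
  also have "real (card (?F j k)) = ancestor_prob l k * (card (permutations_of_set {1..n}) / card ?M)"
    using j k opposite M by (intro card_first_and_ancestor) (auto simp: key_interval_def)
  also have "real (card (?F k j)) = ancestor_prob l j * (card (permutations_of_set {1..n}) / card ?M)"
    using j k opposite M by (intro card_first_and_ancestor) (auto simp: key_interval_def)
  finally show ?thesis by (simp add: add_divide_distrib distrib_left add.commute mult.commute)
qed

lemma excess_both_ancestors_le:
  assumes j: "j \<in> {1..n} - {l}" and k: "k \<in> {1..n} - {l}" "k \<noteq> j"
  defines "a \<equiv> real (card (key_interval l j))" and "b \<equiv> real (card (key_interval l k))"
  shows "real (card {xs \<in> permutations_of_set {1..n}. j \<in> ancestors xs l \<and> k \<in> ancestors xs l}) /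
           card (permutations_of_set {1..n}) - ancestor_prob l j * ancestor_prob l k \<le> 1 / (a * b * (a + b - 1))"
proof -
  let ?N = "real (card (permutations_of_set {1..n}))"
  have ab: "a \<ge> 1" "b \<ge> 1" by (simp_all add: a_def b_def card_key_interval)
  have N: "?N > 0" by (simp add: card_gt_0_iff)
  show ?thesis
  proof (cases "k < l \<longleftrightarrow> j < l")
    case True
    then show ?thesis
      using card_both_ancestors_same_side[OF j k True] N ab by simp
  next
    case False
    have "real (card (key_interval j k)) = a + b - 1"
      using j k False by (auto simp: a_def b_def card_key_interval)
    then have "real (card {xs \<in> permutations_of_set {1..n}. j \<in> ancestors xs l \<and> k \<in> ancestors xs l}) / ?N \<le>
        (1 / a + 1 / b) / (a + b - 1)"
      using card_both_ancestors_opposite_sides_le[OF j k(1) False] N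
      by (simp add: a_def b_def ancestor_prob_def pos_divide_le_eq mult.commute)
    also have "\<dots> = 1 / a * (1 / b) + 1 / (a * b * (a + b - 1))"
    proof -
      have "a + b - 1 > 0" using ab by simp
      then show ?thesis using ab by (simp add: divide_simps)
    qed
    finally show ?thesis by (simp add: a_def b_def ancestor_prob_def)
  qed
qed

lemma sum_over_key_intervals:
  "(\<Sum>j\<in>{1..n} - {l}. f (card (key_interval l j))) = (\<Sum>a=1..l-1. f (a + 1)) + (\<Sum>a=1..n-l. f (a + 1))"
proof -
  have "{1..n} - {l} = {1..l-1} \<union> {l+1..n}" using l by auto
  then have "(\<Sum>j\<in>{1..n} - {l}. f (card (key_interval l j))) =
      (\<Sum>j=1..l-1. f (card (key_interval l j))) + (\<Sum>j=l+1..n. f (card (key_interval l j)))"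
    by (simp add: sum.union_disjoint)
  also have "(\<Sum>j=1..l-1. f (card (key_interval l j))) = (\<Sum>j=1..l-1. f (l - j + 1))"
    by (intro sum.cong refl) (auto simp: card_key_interval)
  also have "(\<Sum>j=l+1..n. f (card (key_interval l j))) = (\<Sum>j=l+1..n. f (j - l + 1))"
    by (intro sum.cong refl) (auto simp: card_key_interval)
  also have "(\<Sum>j=1..l-1. f (l - j + 1)) = (\<Sum>a=1..l-1. f (a + 1))"
    by (rule sum.reindex_bij_witness[where i = "\<lambda>a. l - a" and j = "\<lambda>j. l - j"]) auto
  also have "(\<Sum>j=l+1..n. f (j - l + 1)) = (\<Sum>a=1..n-l. f (a + 1))"
    by (rule sum.reindex_bij_witness[where i = "\<lambda>a. a + l" and j = "\<lambda>j. j - l"]) auto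
  finally show ?thesis .
qed

lemma sum_over_key_intervals_le:
  fixes f :: "nat \<Rightarrow> real"
  assumes "\<And>a. f a \<ge> 0"
  shows "(\<Sum>j\<in>{1..n} - {l}. f (card (key_interval l j))) \<le> 2 * (\<Sum>a=1..n. f (a + 1))"
proof -
  have "(\<Sum>a=1..l-1. f (a + 1)) \<le> (\<Sum>a=1..n. f (a + 1))" "(\<Sum>a=1..n-l. f (a + 1)) \<le> (\<Sum>a=1..n. f (a + 1))"
    using assms l by (intro sum_mono2; auto)+
  then show ?thesis unfolding sum_over_key_intervals by simp
qed

lemma coupling_error_ancestors_le_6: "ancestors.coupling_error \<le> 6"
proof -
  let ?J = "{1..n} - {l}" and ?c = "\<lambda>j. card (key_interval l j)"
  let ?t = "\<lambda>A B :: nat. 1 / (real A * real B * (real A + real B - 1))"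
  have t_nonneg: "?t A B \<ge> 0" for A B
    by (cases "A = 0"; cases "B = 0") auto
  have "(\<Sum>j\<in>?J. ancestor_prob l j ^ 2) \<le> 2 * (\<Sum>a=1..n. 1 / real (a + 1) ^ 2)"
    using sum_over_key_intervals_le[of "\<lambda>c. 1 / real c ^ 2"] by (simp add: ancestor_prob_def power_one_over)
  also have "\<dots> \<le> 2" using sum_inverse_squares_le_1[of n] by (simp add: add.commute)
  finally have squares: "(\<Sum>j\<in>?J. ancestor_prob l j ^ 2) \<le> 2" .
  have "(\<Sum>j\<in>?J. \<Sum>k\<in>?J - {j}.
      real (card {xs \<in> permutations_of_set {1..n}. j \<in> ancestors xs l \<and> k \<in> ancestors xs l}) /
        card (permutations_of_set {1..n}) - ancestor_prob l j * ancestor_prob l k) \<le>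
      (\<Sum>j\<in>?J. \<Sum>k\<in>?J - {j}. ?t (?c j) (?c k))"
    by (intro sum_mono excess_both_ancestors_le) auto
  also have "\<dots> \<le> (\<Sum>j\<in>?J. \<Sum>k\<in>?J. ?t (?c j) (?c k))"
    using t_nonneg by (intro sum_mono sum_mono2) auto
  also have "\<dots> \<le> (\<Sum>j\<in>?J. 2 * (\<Sum>b=1..n. ?t (?c j) (b + 1)))"
    using t_nonneg by (intro sum_mono sum_over_key_intervals_le)
  also have "\<dots> = 2 * (\<Sum>b=1..n. \<Sum>j\<in>?J. ?t (?c j) (b + 1))"
    by (simp only: sum_distrib_left[symmetric] sum.swap[of _ ?J])
  also have "\<dots> \<le> 2 * (\<Sum>b=1..n. 2 * (\<Sum>a=1..n. ?t (a + 1) (b + 1)))"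
    using t_nonneg by (intro mult_left_mono sum_mono sum_over_key_intervals_le) auto
  also have "\<dots> = 4 * (\<Sum>b=1..n. \<Sum>a=1..n. ?t (a + 1) (b + 1))"
    by (simp only: sum_distrib_left[symmetric])
  also have "(\<Sum>b=1..n. \<Sum>a=1..n. ?t (a + 1) (b + 1)) =
      (\<Sum>a=1..n. \<Sum>b=1..n. 1 / ((real a + 1) * (real b + 1) * (real a + real b + 1)))"
    by (subst sum.swap) (simp add: add_ac)
  finally have pairs: "(\<Sum>j\<in>?J. \<Sum>k\<in>?J - {j}.
      real (card {xs \<in> permutations_of_set {1..n}. j \<in> ancestors xs l \<and> k \<in> ancestors xs l}) /
        card (permutations_of_set {1..n}) - ancestor_prob l j * ancestor_prob l k) \<le> 4"
    using double_sum_le_1[of n] by simp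
  show ?thesis unfolding ancestors.coupling_error_def using squares pairs by linarith
qed

lemma sum_ancestor_prob: "(\<Sum>j\<in>{1..n} - {l}. ancestor_prob l j) = harm l + harm (n - l + 1) - 2"
proof -
  have "(\<Sum>a=1..m. 1 / real (a + 1)) = harm (m + 1) - 1" for m
    by (induction m) (simp_all add: harm_Suc harm_expand inverse_eq_divide)
  then show ?thesis
    using sum_over_key_intervals[of "\<lambda>c. 1 / real c"] l by (simp add: ancestor_prob_def)
qed

lemma ln_le_sum_ancestor_prob: "ln (real n) - 2 \<le> (\<Sum>j\<in>{1..n} - {l}. ancestor_prob l j)"
proof -
  have "real l * real l \<le> real l * real n"
    using l by (intro mult_left_mono) auto
  then have "real n \<le> (real l + 1) * (real (n - l + 1) + 1)"
    using l by (simp add: algebra_simps of_nat_diff, linarith)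
  moreover have "real n > 0" using l by simp
  ultimately have "ln (real n) \<le> ln ((real l + 1) * (real (n - l + 1) + 1))"
    by (subst ln_le_cancel_iff) auto
  also have "\<dots> = ln (real l + 1) + ln (real (n - l + 1) + 1)"
    by (rule ln_mult_pos) simp_all
  also have "\<dots> \<le> harm l + harm (n - l + 1)"
    by (intro add_mono ln_le_harm)
  finally show ?thesis
    unfolding sum_ancestor_prob by simp
qed

lemma depth_law_eq_card_ancestors:
  "depth_law n l = map_pmf (\<lambda>xs. card (ancestors xs l)) (pmf_of_set (permutations_of_set {1..n}))"
  unfolding depth_law_def
proof (rule map_pmf_cong[OF refl])
  fix xs assume "xs \<in> set_pmf (pmf_of_set (permutations_of_set {1..n}))"
  then have "xs \<in> permutations_of_set {1..n}" by simp
  then have "distinct xs" "set xs = {1..n}" by (auto simp: permutations_of_set_def)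
  then show "key_depth l (bst_of_list xs) = card (ancestors xs l)"
    using l by (intro key_depth_bst_of_list) auto
qed

lemma expectation_depth_law:
  "measure_pmf.expectation (depth_law n l) real = (\<Sum>j\<in>{1..n} - {l}. ancestor_prob l j)"
  using ancestors.sum_card_A by (simp add: depth_law_eq_card_ancestors integral_pmf_of_set)

lemma dTV_depth_law_le:
  assumes "n \<ge> 2"
  shows "dTV (depth_law n l) (po (measure_pmf.expectation (depth_law n l) real)) \<le> (28 + pi\<^sup>2) / ln (real n)"
proof -
  define \<mu> where "\<mu> = (\<Sum>j\<in>{1..n} - {l}. ancestor_prob l j)"
  have "ln (real n) > 0" "ln (real n) - 2 \<le> \<mu>"
    using assms ln_le_sum_ancestor_prob by (simp_all add: \<mu>_def)
  show ?thesis
  proof (cases "ln (real n) \<le> 28 + pi\<^sup>2")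
    case True
    have "dTV (depth_law n l) (po \<mu>) \<le> 1"
      using ancestor_prob_pos by (intro dTV_po_le_1) (auto simp: \<mu>_def depth_law_def intro: sum_nonneg less_imp_le)
    also have "1 \<le> (28 + pi\<^sup>2) / ln (real n)" using True \<open>ln (real n) > 0\<close> by simp
    finally show ?thesis by (simp add: expectation_depth_law \<mu>_def)
  next
    case False
    moreover have "pi\<^sup>2 \<ge> 0" by simp
    ultimately have "ln (real n) - 2 > 0" by linarith
    then have "\<mu> > 0" using \<open>ln (real n) - 2 \<le> \<mu>\<close> by linarith
    then have "dTV (depth_law n l) (po \<mu>) \<le> 3 / \<mu> * ancestors.coupling_error"
      unfolding \<mu>_def depth_law_eq_card_ancestors by (rule ancestors.dTV_po_le)
    also have "\<dots> \<le> 3 / \<mu> * 6"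
      using coupling_error_ancestors_le_6 \<open>\<mu> > 0\<close> by (intro mult_left_mono) auto
    also have "\<dots> \<le> 18 / (ln (real n) - 2)"
      using \<open>ln (real n) - 2 \<le> \<mu>\<close> \<open>ln (real n) - 2 > 0\<close> by (simp add: frac_le)
    also have "\<dots> \<le> (28 + pi\<^sup>2) / ln (real n)"
      using False by (intro eighteen_div_le) auto
    finally show ?thesis by (simp add: expectation_depth_law \<mu>_def)
  qed
qed

end

theorem theorem3:
  fixes n :: nat
  assumes "n \<ge> 2"
  shows "(SUP l\<in>{1..n}. dTV (depth_law n l)
            (po (measure_pmf.expectation (depth_law n l) real)))
         \<le> (28 + pi\<^sup>2) / ln (real n)"
  using assms dTV_depth_law_le by (intro cSUP_least) auto

end
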